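(* Fix $n\ge 1$, the shape $\lambda=n^2=(n,n)$, and a density $\rho$ with positive entries $\rho_{1,j}=a_j$, $\rho_{2,j}=b_j$; let $a=\sum_j a_j$, $b=\sum_j b_j$. Let $P_1,P_2\in\mathcal{P}$ with $P_1\ge P_2$. If $P_1\in\operatorname{im}(\psi_\rho)$, then $P_2\in\operatorname{im}(\psi_\rho)$.
   Context: A density on a shape $\lambda$ is an assignment of a nonnegative integer $\rho_{i,j}$ to every cell $(i,j)$ (row $i$, column $j$); let $N=\sum\rho_{i,j}$. A standard set-valued Young tableau of shape $\lambda$ and density $\rho$ assigns to each cell $(i,j)$ a set $S_{i,j}$ with $|S_{i,j}|=\rho_{i,j}$, the sets partitioning $[N]$, such that every element of $S_{i,j}$ is smaller than every element of $S_{i,j+1}$ and of $S_{i+1,j}$ whenever those cells exist. $\mathrm{SVT}(\lambda,\rho)$ is the set of these tableaux. $\mathcal{P}$ is the set of lattice paths from $(0,0)$ to $(a,b)$ using steps $E=(1,0)$ and $N=(0,1)$, written as words in $E,N$. The map $\psi_\rho:\mathrm{SVT}(\lambda,\rho)\to\mathcal{P}$ sends $T$ to the word whose $m$-th letter ($1\le m\le a+b$) is $E$ if $m$ lies in the first row of $T$ and $N$ if $m$ lies in the second row. For $P_1,P_2\in\mathcal{P}$, $P_1\ge P_2$ means $P_1$ lies weakly above $P_2$ over $0\le x\le a$. *)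

theory Defs
  imports Main
begin

datatype step = E | N

definition cells2 :: "nat \<Rightarrow> (nat \<times> nat) set" where
  "cells2 n = {1,2} \<times> {1..n}"

definition dsize :: "nat \<Rightarrow> (nat \<Rightarrow> nat \<Rightarrow> nat) \<Rightarrow> nat" where
  "dsize n \<rho> = (\<Sum>(i,j)\<in>cells2 n. \<rho> i j)"

definition SVT2 :: "nat \<Rightarrow> (nat \<Rightarrow> nat \<Rightarrow> nat) \<Rightarrow> (nat \<Rightarrow> nat \<Rightarrow> nat set) set" where
  "SVT2 n \<rho> = {T.
     (\<forall>i j. (i,j) \<notin> cells2 n \<longrightarrow> T i j = {}) \<and>
     (\<forall>(i,j)\<in>cells2 n. finite (T i j) \<and> card (T i j) = \<rho> i j) \<and>
     (\<forall>c\<in>cells2 n. \<forall>d\<in>cells2 n. c \<noteq> d \<longrightarrow>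
         T (fst c) (snd c) \<inter> T (fst d) (snd d) = {}) \<and>
     (\<Union>(i,j)\<in>cells2 n. T i j) = {1..dsize n \<rho>} \<and>
     (\<forall>(i,j)\<in>cells2 n. (i, j+1) \<in> cells2 n \<longrightarrow>
         (\<forall>x\<in>T i j. \<forall>y\<in>T i (j+1). x < y)) \<and>
     (\<forall>(i,j)\<in>cells2 n. (i+1, j) \<in> cells2 n \<longrightarrow>
         (\<forall>x\<in>T i j. \<forall>y\<in>T (i+1) j. x < y))}"

text \<open>Lattice paths from (0,0) to (a,b) with steps E=(1,0), N=(0,1), as words.\<close>
definition paths :: "nat \<Rightarrow> nat \<Rightarrow> step list set" where
  "paths a b = {w. length w = a + b \<and> count_list w E = a \<and> count_list w N = b}"

definition path_points :: "step list \<Rightarrow> (nat \<times> nat) set" where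
  "path_points w = {(count_list (take k w) E, count_list (take k w) N) | k. k \<le> length w}"

definition weakly_above :: "nat \<Rightarrow> step list \<Rightarrow> step list \<Rightarrow> bool" where
  "weakly_above a P1 P2 = (\<forall>x\<le>a.
     Min {y. (x,y) \<in> path_points P2} \<le> Min {y. (x,y) \<in> path_points P1})"

definition psi :: "nat \<Rightarrow> nat \<Rightarrow> (nat \<Rightarrow> nat \<Rightarrow> nat set) \<Rightarrow> step list" where
  "psi n len T = map (\<lambda>m. if (\<exists>j\<in>{1..n}. m \<in> T 1 j) then E else N) [1..<len + 1]"

end

theory Submission
  imports Defs
begin

text \<open>A word w is psi of some tableau iff it is admissible: whenever a prefix of w contains
  more N's than the second-row cells of columns 1, ..., j - 1 hold, it already contains at least
  as many E's as the first-row cells of columns 1, ..., j hold.  Necessity: such a prefix contains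
  an entry of a second-row cell in some column j' \<ge> j, which exceeds every entry of the first j
  first-row cells.  Sufficiency: filling each row from left to right with the positions of its
  letters gives a standard tableau, the column condition being exactly admissibility.  For a
  lattice path, admissibility bounds from above the lowest height of the path over each abscissa,
  so it passes from P1 to every path lying weakly below P1.\<close>

definition prefix_count :: "'a \<Rightarrow> 'a list \<Rightarrow> nat \<Rightarrow> nat" where
  "prefix_count s w k = count_list (take k w) s"

definition occurrences :: "'a \<Rightarrow> 'a list \<Rightarrow> nat set" where
  "occurrences s w = {m \<in> {1..length w}. w ! (m - 1) = s}"

definition occurrences_between :: "'a \<Rightarrow> 'a list \<Rightarrow> nat \<Rightarrow> nat \<Rightarrow> nat set" where
  "occurrences_between s w lo hi =
     {m \<in> occurrences s w. lo < prefix_count s w m \<and> prefix_count s w m \<le> hi}"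

lemma prefix_count_0 [simp]: "prefix_count s w 0 = 0"
  by (simp add: prefix_count_def)

lemma prefix_count_length [simp]: "prefix_count s w (length w) = count_list w s"
  by (simp add: prefix_count_def)

lemma prefix_count_Suc:
  "k < length w \<Longrightarrow> prefix_count s w (Suc k) = prefix_count s w k + (if w ! k = s then 1 else 0)"
  by (simp add: prefix_count_def take_Suc_conv_app_nth)

lemma prefix_count_mono: "k \<le> k' \<Longrightarrow> prefix_count s w k \<le> prefix_count s w k'"
  by (auto simp: prefix_count_def take_add dest!: le_Suc_ex)

lemma prefix_count_le_count_list: "prefix_count s w k \<le> count_list w s"
proof -
  have "count_list w s = count_list (take k w) s + count_list (drop k w) s"
    by (subst append_take_drop_id[symmetric, of w k]) (simp only: count_list_append)
  then show ?thesis by (simp add: prefix_count_def)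
qed

lemma prefix_count_at_occurrence:
  "m \<in> occurrences s w \<Longrightarrow> prefix_count s w m = Suc (prefix_count s w (m - 1))"
  using prefix_count_Suc[of "m - 1" w s] by (auto simp: occurrences_def)

lemma prefix_count_less_at_occurrence:
  assumes "m < m'" "m' \<in> occurrences s w"
  shows "prefix_count s w m < prefix_count s w m'"
proof -
  have "prefix_count s w m \<le> prefix_count s w (m' - 1)"
    using assms(1) by (intro prefix_count_mono) simp
  also have "\<dots> < prefix_count s w m'"
    using prefix_count_at_occurrence[OF assms(2)] by simp
  finally show ?thesis .
qed

lemma inj_on_prefix_count: "inj_on (prefix_count s w) (occurrences s w)"
proof (rule inj_onI)
  fix m m' assume "m \<in> occurrences s w" "m' \<in> occurrences s w"
    and "prefix_count s w m = prefix_count s w m'"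
  then show "m = m'"
    using prefix_count_less_at_occurrence[of m m' s w] prefix_count_less_at_occurrence[of m' m s w]
    by (cases m m' rule: linorder_cases) auto
qed

lemma occurrence_with_prefix_count:
  assumes "0 < v" "v \<le> prefix_count s w k" "k \<le> length w"
  shows "\<exists>m\<in>occurrences s w. m \<le> k \<and> prefix_count s w m = v"
  using assms(2,3)
proof (induction k)
  case 0
  then show ?case using assms(1) by simp
next
  case (Suc k)
  show ?case
  proof (cases "v \<le> prefix_count s w k")
    case True
    then obtain m where "m \<in> occurrences s w" "m \<le> k" "prefix_count s w m = v"
      using Suc.IH Suc.prems(2) by auto
    then show ?thesis by (intro bexI[of _ m]) auto
  next
    case False
    with Suc.prems prefix_count_Suc[of k w s] have "w ! k = s" "prefix_count s w (Suc k) = v"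
      by (auto split: if_splits)
    then show ?thesis using Suc.prems by (intro bexI[of _ "Suc k"]) (auto simp: occurrences_def)
  qed
qed

lemma bij_betw_prefix_count:
  "bij_betw (prefix_count s w) (occurrences s w) {1..count_list w s}"
  unfolding bij_betw_def
proof (intro conjI inj_on_prefix_count equalityI subsetI)
  fix v assume "v \<in> prefix_count s w ` occurrences s w"
  then obtain m where "m \<in> occurrences s w" "v = prefix_count s w m" by blast
  then show "v \<in> {1..count_list w s}"
    using prefix_count_at_occurrence[of m s w] prefix_count_le_count_list[of s w m] by simp
next
  fix v assume "v \<in> {1..count_list w s}"
  then obtain m where "m \<in> occurrences s w" "prefix_count s w m = v"
    using occurrence_with_prefix_count[of v s w "length w"] by auto
  then show "v \<in> prefix_count s w ` occurrences s w" by blast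
qed

lemma finite_occurrences_between: "finite (occurrences_between s w lo hi)"
  by (simp add: occurrences_between_def occurrences_def)

lemma card_occurrences_between:
  assumes "hi \<le> count_list w s"
  shows "card (occurrences_between s w lo hi) = hi - lo"
proof -
  have "prefix_count s w ` occurrences_between s w lo hi = {lo<..hi}"
  proof (intro equalityI subsetI)
    fix v assume "v \<in> {lo<..hi}"
    then have "v \<in> prefix_count s w ` occurrences s w"
      using assms bij_betw_prefix_count[of s w] by (simp add: bij_betw_def)
    then show "v \<in> prefix_count s w ` occurrences_between s w lo hi"
      using \<open>v \<in> {lo<..hi}\<close> by (auto simp: occurrences_between_def)
  qed (auto simp: occurrences_between_def)
  moreover have "inj_on (prefix_count s w) (occurrences_between s w lo hi)"
    by (rule inj_on_subset[OF inj_on_prefix_count]) (simp add: occurrences_between_def)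
  ultimately show ?thesis by (metis card_image card_greaterThanAtMost)
qed

lemma occurrences_between_less:
  assumes "m \<in> occurrences_between s w lo hi" "m' \<in> occurrences_between s w lo' hi'" "hi \<le> lo'"
  shows "m < m'"
proof (rule ccontr)
  assume "\<not> m < m'"
  then have "prefix_count s w m' \<le> prefix_count s w m" by (simp add: prefix_count_mono)
  then show False using assms by (simp add: occurrences_between_def)
qed

lemma cells2_iff: "(i, j) \<in> cells2 n \<longleftrightarrow> (i = 1 \<or> i = 2) \<and> 1 \<le> j \<and> j \<le> n"
  by (auto simp: cells2_def)

definition row_sum :: "(nat \<Rightarrow> nat \<Rightarrow> nat) \<Rightarrow> nat \<Rightarrow> nat \<Rightarrow> nat" where
  "row_sum \<rho> i j = (\<Sum>t=1..j. \<rho> i t)"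

lemma row_sum_0 [simp]: "row_sum \<rho> i 0 = 0"
  by (simp add: row_sum_def)

lemma row_sum_mono: "j \<le> j' \<Longrightarrow> row_sum \<rho> i j \<le> row_sum \<rho> i j'"
  unfolding row_sum_def by (rule sum_mono2) auto

lemma row_sum_diff: "1 \<le> j \<Longrightarrow> row_sum \<rho> i j - row_sum \<rho> i (j - 1) = \<rho> i j"
  by (cases j) (simp_all add: row_sum_def)

lemma threshold_crossing:
  fixes f :: "nat \<Rightarrow> nat"
  assumes "f 0 = 0" "0 < v" "v \<le> f n"
  shows "\<exists>j\<in>{1..n}. f (j - 1) < v \<and> v \<le> f j"
  using assms(3)
proof (induction n)
  case 0
  then show ?case using assms(1,2) by simp
next
  case (Suc n)
  show ?case
  proof (cases "v \<le> f n")
    case True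
    then obtain j where "j \<in> {1..n}" "f (j - 1) < v" "v \<le> f j" using Suc.IH by blast
    then show ?thesis by (intro bexI[of _ j]) auto
  next
    case False
    then show ?thesis using Suc.prems by (intro bexI[of _ "Suc n"]) auto
  qed
qed

lemma dsize_eq_row_sums: "dsize n \<rho> = row_sum \<rho> 1 n + row_sum \<rho> 2 n"
proof -
  have "dsize n \<rho> = (\<Sum>i\<in>{1,2::nat}. \<Sum>j=1..n. \<rho> i j)"
    unfolding dsize_def cells2_def by (simp add: sum.cartesian_product)
  then show ?thesis by (simp add: row_sum_def)
qed

definition admissible :: "nat \<Rightarrow> (nat \<Rightarrow> nat \<Rightarrow> nat) \<Rightarrow> step list \<Rightarrow> bool" where
  "admissible n \<rho> w \<longleftrightarrow> (\<forall>k\<le>length w. \<forall>j\<in>{1..n}.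
     row_sum \<rho> 2 (j - 1) < prefix_count N w k \<longrightarrow> row_sum \<rho> 1 j \<le> prefix_count E w k)"

definition path_floor :: "step list \<Rightarrow> nat \<Rightarrow> nat" where
  "path_floor w x = Min {y. (x, y) \<in> path_points w}"

lemma path_points_iff:
  "(x, y) \<in> path_points w \<longleftrightarrow> (\<exists>k\<le>length w. prefix_count E w k = x \<and> prefix_count N w k = y)"
  by (auto simp: path_points_def prefix_count_def)

lemma finite_path_points_column: "finite {y. (x, y) \<in> path_points w}"
proof (rule finite_subset)
  show "{y. (x, y) \<in> path_points w} \<subseteq> prefix_count N w ` {0..length w}"
    by (auto simp: path_points_iff)
qed simp

lemma prefix_count_N_le_path_floor:
  assumes "k \<le> length w" "prefix_count E w k < count_list w E"
  shows "prefix_count N w k \<le> path_floor w (Suc (prefix_count E w k))"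
  unfolding path_floor_def
proof (rule Min.boundedI[OF finite_path_points_column])
  let ?x = "Suc (prefix_count E w k)"
  obtain m where "m \<in> occurrences E w" "prefix_count E w m = ?x"
    using occurrence_with_prefix_count[of ?x E w "length w"] assms(2) by auto
  then show "{y. (?x, y) \<in> path_points w} \<noteq> {}"
    by (auto simp: path_points_iff occurrences_def)
  fix y assume "y \<in> {y. (?x, y) \<in> path_points w}"
  then obtain k' where k': "k' \<le> length w" "prefix_count E w k' = ?x" "prefix_count N w k' = y"
    by (auto simp: path_points_iff)
  then have "\<not> k' < k" using prefix_count_mono[of k' k E w] by auto
  then show "prefix_count N w k \<le> y" using prefix_count_mono[of k k' N w] k' by simp
qed

text \<open>The lowest point above abscissa x + 1 is reached by the E-step leaving abscissa x.\<close>
lemma path_floor_attained: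
  assumes "x < count_list w E"
  shows "\<exists>k\<le>length w. prefix_count E w k = x \<and> path_floor w (Suc x) \<le> prefix_count N w k"
proof -
  obtain m where m: "m \<in> occurrences E w" "prefix_count E w m = Suc x"
    using occurrence_with_prefix_count[of "Suc x" E w "length w"] assms by auto
  then have bounds: "1 \<le> m" "m \<le> length w" and "w ! (m - 1) = E" by (auto simp: occurrences_def)
  then have N_eq: "prefix_count N w m = prefix_count N w (m - 1)"
    using prefix_count_Suc[of "m - 1" w N] by simp
  have "(Suc x, prefix_count N w m) \<in> path_points w"
    using m bounds by (auto simp: path_points_iff)
  then have "path_floor w (Suc x) \<le> prefix_count N w m"
    unfolding path_floor_def by (simp add: finite_path_points_column)
  moreover have "prefix_count E w (m - 1) = x" using prefix_count_at_occurrence[OF m(1)] m(2) by simp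
  ultimately show ?thesis using bounds N_eq by (intro exI[of _ "m - 1"]) auto
qed

lemma admissible_if_weakly_above:
  assumes P1: "P1 \<in> paths a b" and P2: "P2 \<in> paths a b" and above: "weakly_above a P1 P2"
    and adm: "admissible n \<rho> P1" and a: "row_sum \<rho> 1 n = a"
  shows "admissible n \<rho> P2"
  unfolding admissible_def
proof (intro allI impI ballI)
  fix k j assume k: "k \<le> length P2" and j: "j \<in> {1..n}"
    and more_N: "row_sum \<rho> 2 (j - 1) < prefix_count N P2 k"
  define x where "x = prefix_count E P2 k"
  show "row_sum \<rho> 1 j \<le> prefix_count E P2 k"
  proof (rule ccontr)
    assume "\<not> row_sum \<rho> 1 j \<le> prefix_count E P2 k"
    then have x_less: "x < row_sum \<rho> 1 j" by (simp add: x_def)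
    also have "\<dots> \<le> a" using row_sum_mono[of j n \<rho> 1] j a by simp
    finally have "x < a" .
    then obtain k1 where k1: "k1 \<le> length P1" "prefix_count E P1 k1 = x"
        "path_floor P1 (Suc x) \<le> prefix_count N P1 k1"
      using path_floor_attained[of x P1] P1 by (auto simp: paths_def)
    have "prefix_count N P2 k \<le> path_floor P2 (Suc x)"
      using prefix_count_N_le_path_floor[OF k] \<open>x < a\<close> P2 by (simp add: x_def paths_def)
    also have "\<dots> \<le> path_floor P1 (Suc x)"
      using above \<open>x < a\<close> by (simp add: weakly_above_def path_floor_def)
    also have "\<dots> \<le> prefix_count N P1 k1" by (rule k1(3))
    finally have "row_sum \<rho> 2 (j - 1) < prefix_count N P1 k1" using more_N by simp
    then have "row_sum \<rho> 1 j \<le> x" using adm k1(1,2) j unfolding admissible_def by blast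
    then show False using x_less by simp
  qed
qed

context
  fixes n :: nat and \<rho> :: "nat \<Rightarrow> nat \<Rightarrow> nat" and T :: "nat \<Rightarrow> nat \<Rightarrow> nat set"
  assumes T: "T \<in> SVT2 n \<rho>"
begin

lemmas SVT2_conditions = T[unfolded SVT2_def mem_Collect_eq]

lemma SVT2_finite: "finite (T i j)"
proof (cases "(i, j) \<in> cells2 n")
  case True
  then show ?thesis using SVT2_conditions[THEN conjunct2, THEN conjunct1] by fast
next
  case False
  then show ?thesis using SVT2_conditions[THEN conjunct1] by simp
qed

lemma SVT2_card: "(i, j) \<in> cells2 n \<Longrightarrow> card (T i j) = \<rho> i j"
  using SVT2_conditions[THEN conjunct2, THEN conjunct1] by fast

lemma SVT2_disjoint:
  "(i, j) \<in> cells2 n \<Longrightarrow> (i', j') \<in> cells2 n \<Longrightarrow> (i, j) \<noteq> (i', j') \<Longrightarrow> T i j \<inter> T i' j' = {}"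
  using SVT2_conditions[THEN conjunct2, THEN conjunct2, THEN conjunct1]
  by (metis fst_conv snd_conv)

lemma SVT2_Union: "(\<Union>(i, j)\<in>cells2 n. T i j) = {1..dsize n \<rho>}"
  using SVT2_conditions[THEN conjunct2, THEN conjunct2, THEN conjunct2, THEN conjunct1] .

lemma SVT2_less_right:
  "(i, Suc j) \<in> cells2 n \<Longrightarrow> 1 \<le> j \<Longrightarrow> x \<in> T i j \<Longrightarrow> y \<in> T i (Suc j) \<Longrightarrow> x < y"
  using SVT2_conditions[THEN conjunct2, THEN conjunct2, THEN conjunct2, THEN conjunct2,
      THEN conjunct1]
  by (auto simp: cells2_iff)

lemma SVT2_less_below: "1 \<le> j \<Longrightarrow> j \<le> n \<Longrightarrow> x \<in> T 1 j \<Longrightarrow> y \<in> T 2 j \<Longrightarrow> x < y"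
  using SVT2_conditions[THEN conjunct2, THEN conjunct2, THEN conjunct2, THEN conjunct2,
      THEN conjunct2]
  by (auto simp: cells2_iff numeral_2_eq_2)

text \<open>Positivity makes the first-row cells nonempty, so the order chains through them.\<close>
lemma SVT2_first_row_less_second_row:
  assumes pos: "\<forall>t\<in>{1..n}. 0 < \<rho> 1 t"
  shows "1 \<le> i \<Longrightarrow> i \<le> j \<Longrightarrow> j \<le> n \<Longrightarrow> x \<in> T 1 i \<Longrightarrow> y \<in> T 2 j \<Longrightarrow> x < y"
proof (induction "j - i" arbitrary: i x)
  case 0
  then show ?case using SVT2_less_below by simp
next
  case (Suc d)
  then have cell: "(1, Suc i) \<in> cells2 n" by (simp add: cells2_iff)
  then have "0 < card (T 1 (Suc i))"
    using SVT2_card[OF cell] pos[rule_format, of "Suc i"] by (simp add: cells2_iff)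
  then have "T 1 (Suc i) \<noteq> {}" by auto
  then obtain z where z: "z \<in> T 1 (Suc i)" by blast
  have "x < z" using SVT2_less_right[OF cell] Suc.prems z by simp
  also have "z < y" using Suc.hyps(1)[of "Suc i" z] Suc.hyps(2) Suc.prems z by simp
  finally show ?case .
qed

lemma card_UN_row:
  assumes "i = 1 \<or> i = 2" "j \<le> n"
  shows "card (\<Union>t\<in>{1..j}. T i t) = row_sum \<rho> i j"
proof -
  have "card (\<Union>t\<in>{1..j}. T i t) = (\<Sum>t=1..j. card (T i t))"
    using assms by (intro card_UN_disjoint) (auto simp: SVT2_finite SVT2_disjoint cells2_iff)
  also have "\<dots> = row_sum \<rho> i j"
    unfolding row_sum_def using assms by (intro sum.cong) (auto simp: SVT2_card cells2_iff)
  finally show ?thesis .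
qed

lemma SVT2_second_row_if_not_first:
  assumes "m \<in> {1..dsize n \<rho>}" "\<forall>j\<in>{1..n}. m \<notin> T 1 j"
  shows "\<exists>j\<in>{1..n}. m \<in> T 2 j"
proof -
  obtain i j where "(i, j) \<in> cells2 n" "m \<in> T i j"
    using assms(1) SVT2_Union by blast
  then show ?thesis using assms(2) by (auto simp: cells2_iff)
qed


lemma SVT2_second_row_entry_in_prefix:
  assumes k: "k \<le> dsize n \<rho>" and j: "j \<in> {1..n}"
    and more_N: "row_sum \<rho> 2 (j - 1) < card {m\<in>{1..k}. \<not> (\<exists>t\<in>{1..n}. m \<in> T 1 t)}"
  shows "\<exists>m\<in>{1..k}. \<exists>j'\<in>{j..n}. m \<in> T 2 j'"
proof (rule ccontr)
  assume none: "\<not> ?thesis"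
  have "{m\<in>{1..k}. \<not> (\<exists>t\<in>{1..n}. m \<in> T 1 t)} \<subseteq> (\<Union>t\<in>{1..j - 1}. T 2 t)"
  proof
    fix m assume m: "m \<in> {m\<in>{1..k}. \<not> (\<exists>t\<in>{1..n}. m \<in> T 1 t)}"
    then obtain t where "t \<in> {1..n}" "m \<in> T 2 t"
      using SVT2_second_row_if_not_first[of m] k by auto
    then show "m \<in> (\<Union>t\<in>{1..j - 1}. T 2 t)" using none m by force
  qed
  then have "card {m\<in>{1..k}. \<not> (\<exists>t\<in>{1..n}. m \<in> T 1 t)} \<le> card (\<Union>t\<in>{1..j - 1}. T 2 t)"
    by (intro card_mono) (simp_all add: SVT2_finite)
  also have "\<dots> = row_sum \<rho> 2 (j - 1)" using j by (intro card_UN_row) auto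
  finally show False using more_N by simp
qed

lemma row_sum_le_first_row_entries_in_prefix:
  assumes pos: "\<forall>t\<in>{1..n}. 0 < \<rho> 1 t"
    and m: "m \<in> {1..k}" "m \<in> T 2 j'" and j: "1 \<le> j" "j \<le> j'" "j' \<le> n"
  shows "row_sum \<rho> 1 j \<le> card {m'\<in>{1..k}. \<exists>t\<in>{1..n}. m' \<in> T 1 t}"
proof -
  have "(\<Union>t\<in>{1..j}. T 1 t) \<subseteq> {m'\<in>{1..k}. \<exists>t\<in>{1..n}. m' \<in> T 1 t}"
  proof
    fix x assume "x \<in> (\<Union>t\<in>{1..j}. T 1 t)"
    then obtain t where t: "t \<in> {1..j}" "x \<in> T 1 t" by blast
    then have "x < m" using SVT2_first_row_less_second_row[OF pos, of t j' x m] m j by auto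
    moreover have "(1, t) \<in> cells2 n" using t j by (simp add: cells2_iff)
    then have "x \<in> (\<Union>(i, j)\<in>cells2 n. T i j)" using t(2) by blast
    then have "x \<in> {1..dsize n \<rho>}" by (simp only: SVT2_Union)
    ultimately show "x \<in> {m'\<in>{1..k}. \<exists>t\<in>{1..n}. m' \<in> T 1 t}" using t j m by auto
  qed
  then have "card (\<Union>t\<in>{1..j}. T 1 t) \<le> card {m'\<in>{1..k}. \<exists>t\<in>{1..n}. m' \<in> T 1 t}"
    by (intro card_mono) simp_all
  then show ?thesis using card_UN_row[of 1 j] j by simp
qed

end

lemma count_list_map_upt: "count_list (map f [1..<k+1]) s = card {m\<in>{1..k}. f m = s}"
proof (induction k)
  case (Suc k)
  have "{m\<in>{1..Suc k}. f m = s} = {m\<in>{1..k}. f m = s} \<union> (if f (Suc k) = s then {Suc k} else {})"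
    by (auto simp: le_Suc_eq)
  then show ?case using Suc by auto
qed simp

lemma prefix_count_map_upt:
  assumes "k \<le> L"
  shows "prefix_count s (map f [1..<L+1]) k = card {m\<in>{1..k}. f m = s}"
proof -
  have "take k [1..<L+1] = [1..<1+k]" using assms by (intro take_upt) simp
  then have "take k [1..<L+1] = [1..<k+1]" by (simp only: add.commute)
  then show ?thesis by (simp only: prefix_count_def take_map count_list_map_upt)
qed

lemma length_psi [simp]: "length (psi n L T) = L"
  by (simp add: psi_def)

lemma prefix_count_E_psi:
  assumes "k \<le> L"
  shows "prefix_count E (psi n L T) k = card {m\<in>{1..k}. \<exists>j\<in>{1..n}. m \<in> T 1 j}"
proof -
  let ?f = "\<lambda>m. if \<exists>j\<in>{1..n}. m \<in> T 1 j then E else N"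
  have "prefix_count E (psi n L T) k = card {m\<in>{1..k}. ?f m = E}"
    unfolding psi_def by (rule prefix_count_map_upt[OF assms])
  also have "{m\<in>{1..k}. ?f m = E} = {m\<in>{1..k}. \<exists>j\<in>{1..n}. m \<in> T 1 j}" by auto
  finally show ?thesis .
qed

lemma prefix_count_N_psi:
  assumes "k \<le> L"
  shows "prefix_count N (psi n L T) k = card {m\<in>{1..k}. \<not> (\<exists>j\<in>{1..n}. m \<in> T 1 j)}"
proof -
  let ?f = "\<lambda>m. if \<exists>j\<in>{1..n}. m \<in> T 1 j then E else N"
  have "prefix_count N (psi n L T) k = card {m\<in>{1..k}. ?f m = N}"
    unfolding psi_def by (rule prefix_count_map_upt[OF assms])
  also have "{m\<in>{1..k}. ?f m = N} = {m\<in>{1..k}. \<not> (\<exists>j\<in>{1..n}. m \<in> T 1 j)}" by auto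
  finally show ?thesis .
qed

lemma admissible_psi:
  assumes T: "T \<in> SVT2 n \<rho>" and pos: "\<forall>t\<in>{1..n}. 0 < \<rho> 1 t"
  shows "admissible n \<rho> (psi n (dsize n \<rho>) T)"
  unfolding admissible_def
proof (intro allI impI ballI)
  fix k j assume "k \<le> length (psi n (dsize n \<rho>) T)" and j: "j \<in> {1..n}"
    and more_N: "row_sum \<rho> 2 (j - 1) < prefix_count N (psi n (dsize n \<rho>) T) k"
  then have k: "k \<le> dsize n \<rho>" by simp
  obtain m j' where "m \<in> {1..k}" "j' \<in> {j..n}" "m \<in> T 2 j'"
    using SVT2_second_row_entry_in_prefix[OF T k j] more_N prefix_count_N_psi[OF k] by auto
  then show "row_sum \<rho> 1 j \<le> prefix_count E (psi n (dsize n \<rho>) T) k"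
    using row_sum_le_first_row_entries_in_prefix[OF T pos] j prefix_count_E_psi[OF k] by auto
qed

definition row_letter :: "nat \<Rightarrow> step" where
  "row_letter i = (if i = 1 then E else N)"

lemma row_letter_simps [simp]: "row_letter (Suc 0) = E" "row_letter 2 = N"
  by (simp_all add: row_letter_def)

definition canonical_filling ::
    "nat \<Rightarrow> (nat \<Rightarrow> nat \<Rightarrow> nat) \<Rightarrow> step list \<Rightarrow> nat \<Rightarrow> nat \<Rightarrow> nat set" where
  "canonical_filling n \<rho> w i j =
     (if (i, j) \<in> cells2 n
      then occurrences_between (row_letter i) w (row_sum \<rho> i (j - 1)) (row_sum \<rho> i j)
      else {})"

context
  fixes n :: nat and \<rho> :: "nat \<Rightarrow> nat \<Rightarrow> nat" and w :: "step list"
  assumes w: "w \<in> paths (row_sum \<rho> 1 n) (row_sum \<rho> 2 n)"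
begin

lemma count_list_row_letter: "i = 1 \<or> i = 2 \<Longrightarrow> count_list w (row_letter i) = row_sum \<rho> i n"
  using w by (auto simp: paths_def)

lemma card_canonical_filling:
  assumes "(i, j) \<in> cells2 n"
  shows "card (canonical_filling n \<rho> w i j) = \<rho> i j"
proof -
  have "row_sum \<rho> i j \<le> count_list w (row_letter i)"
    using assms count_list_row_letter row_sum_mono[of j n \<rho> i] by (auto simp: cells2_iff)
  then show ?thesis
    using assms row_sum_diff[of j \<rho> i]
    by (simp add: canonical_filling_def card_occurrences_between cells2_iff)
qed

lemma canonical_filling_disjoint:
  assumes "(i, j) \<in> cells2 n" "(i', j') \<in> cells2 n" "(i, j) \<noteq> (i', j')"
  shows "canonical_filling n \<rho> w i j \<inter> canonical_filling n \<rho> w i' j' = {}"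
proof (cases "i = i'")
  case False
  then have "row_letter i \<noteq> row_letter i'" using assms by (auto simp: cells2_iff)
  then show ?thesis
    by (auto simp: canonical_filling_def occurrences_between_def occurrences_def)
next
  case True
  have "x < x'" if "x \<in> canonical_filling n \<rho> w i j" "x' \<in> canonical_filling n \<rho> w i j'" "j < j'"
    for x x' j j'
    using that row_sum_mono[of j "j' - 1" \<rho> i] occurrences_between_less[of x "row_letter i" w]
    by (simp add: canonical_filling_def split: if_splits)
  then show ?thesis using True assms(3) by (cases j j' rule: linorder_cases) fastforce+
qed

lemma canonical_filling_covers:
  assumes "m \<in> occurrences (row_letter i) w" "i = 1 \<or> i = 2"
  shows "\<exists>j\<in>{1..n}. m \<in> canonical_filling n \<rho> w i j"
proof -
  have "0 < prefix_count (row_letter i) w m" using prefix_count_at_occurrence[OF assms(1)] by simp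
  moreover have "prefix_count (row_letter i) w m \<le> row_sum \<rho> i n"
    using prefix_count_le_count_list count_list_row_letter[OF assms(2)] by metis
  ultimately obtain j where "j \<in> {1..n}" "row_sum \<rho> i (j - 1) < prefix_count (row_letter i) w m"
      "prefix_count (row_letter i) w m \<le> row_sum \<rho> i j"
    using threshold_crossing[of "row_sum \<rho> i" "prefix_count (row_letter i) w m" n] by auto
  then show ?thesis using assms
    by (intro bexI[of _ j]) (auto simp: canonical_filling_def occurrences_between_def cells2_iff)
qed

lemma canonical_filling_Union: "(\<Union>(i, j)\<in>cells2 n. canonical_filling n \<rho> w i j) = {1..dsize n \<rho>}"
proof -
  have len: "length w = dsize n \<rho>" using w by (simp add: paths_def dsize_eq_row_sums)
  have "m \<in> (\<Union>(i, j)\<in>cells2 n. canonical_filling n \<rho> w i j)" if m: "m \<in> {1..length w}" for m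
  proof -
    define i where "i = (if w ! (m - 1) = E then 1 else 2 :: nat)"
    have "m \<in> occurrences (row_letter i) w" "i = 1 \<or> i = 2"
      using m by (auto simp: i_def occurrences_def intro: step.exhaust)
    then obtain j where "j \<in> {1..n}" "m \<in> canonical_filling n \<rho> w i j"
      using canonical_filling_covers by blast
    then show ?thesis using \<open>i = 1 \<or> i = 2\<close> by (auto simp: cells2_iff)
  qed
  moreover have "canonical_filling n \<rho> w i j \<subseteq> {1..length w}" for i j
    by (auto simp: canonical_filling_def occurrences_between_def occurrences_def)
  ultimately show ?thesis unfolding len[symmetric] by blast
qed

lemma canonical_filling_less_right:
  assumes "x \<in> canonical_filling n \<rho> w i j" "y \<in> canonical_filling n \<rho> w i (Suc j)"
  shows "x < y"
  using assms occurrences_between_less[of x "row_letter i" w]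
  by (simp add: canonical_filling_def split: if_splits)

lemma canonical_filling_less_below:
  assumes adm: "admissible n \<rho> w"
    and x: "x \<in> canonical_filling n \<rho> w 1 j" and y: "y \<in> canonical_filling n \<rho> w 2 j"
  shows "x < y"
proof (rule ccontr)
  assume "\<not> x < y"
  have j: "j \<in> {1..n}" using x by (simp add: canonical_filling_def cells2_iff split: if_splits)
  have x': "x \<in> occurrences_between E w (row_sum \<rho> 1 (j - 1)) (row_sum \<rho> 1 j)"
    and y': "y \<in> occurrences_between N w (row_sum \<rho> 2 (j - 1)) (row_sum \<rho> 2 j)"
    using x y j by (simp_all add: canonical_filling_def cells2_iff)
  then have "x \<noteq> y" by (auto simp: occurrences_between_def occurrences_def)
  then have "y < x" using \<open>\<not> x < y\<close> by simp
  then have "prefix_count E w y < prefix_count E w x"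
    using x' by (intro prefix_count_less_at_occurrence) (simp_all add: occurrences_between_def)
  moreover have "row_sum \<rho> 1 j \<le> prefix_count E w y"
    using adm j y' unfolding admissible_def occurrences_between_def occurrences_def by auto
  ultimately show False using x' by (simp add: occurrences_between_def)
qed

lemma canonical_filling_SVT2:
  assumes adm: "admissible n \<rho> w"
  shows "canonical_filling n \<rho> w \<in> SVT2 n \<rho>"
  unfolding SVT2_def mem_Collect_eq
proof (intro conjI)
  let ?T = "canonical_filling n \<rho> w"
  show "\<forall>i j. (i, j) \<notin> cells2 n \<longrightarrow> ?T i j = {}"
    by (simp add: canonical_filling_def)
  show "\<forall>(i, j)\<in>cells2 n. finite (?T i j) \<and> card (?T i j) = \<rho> i j"
    using card_canonical_filling by (auto simp: canonical_filling_def finite_occurrences_between)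
  show "\<forall>c\<in>cells2 n. \<forall>d\<in>cells2 n. c \<noteq> d \<longrightarrow>
      ?T (fst c) (snd c) \<inter> ?T (fst d) (snd d) = {}"
    by (metis canonical_filling_disjoint prod.collapse)
  show "(\<Union>(i, j)\<in>cells2 n. ?T i j) = {1..dsize n \<rho>}"
    by (rule canonical_filling_Union)
  show "\<forall>(i, j)\<in>cells2 n. (i, j + 1) \<in> cells2 n \<longrightarrow> (\<forall>x\<in>?T i j. \<forall>y\<in>?T i (j + 1). x < y)"
    using canonical_filling_less_right by auto
  show "\<forall>(i, j)\<in>cells2 n. (i + 1, j) \<in> cells2 n \<longrightarrow> (\<forall>x\<in>?T i j. \<forall>y\<in>?T (i + 1) j. x < y)"
    using canonical_filling_less_below[OF adm] by (auto simp: cells2_iff numeral_2_eq_2)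
qed


lemma psi_canonical_filling: "psi n (length w) (canonical_filling n \<rho> w) = w"
proof (rule nth_equalityI)
  fix k assume "k < length (psi n (length w) (canonical_filling n \<rho> w))"
  then have k: "k < length w" by simp
  have "(\<exists>j\<in>{1..n}. Suc k \<in> canonical_filling n \<rho> w 1 j) \<longleftrightarrow> w ! k = E"
  proof
    assume "\<exists>j\<in>{1..n}. Suc k \<in> canonical_filling n \<rho> w 1 j"
    then show "w ! k = E"
      by (auto simp: canonical_filling_def occurrences_between_def occurrences_def split: if_splits)
  next
    assume "w ! k = E"
    then have "Suc k \<in> occurrences (row_letter 1) w" using k by (simp add: occurrences_def)
    then show "\<exists>j\<in>{1..n}. Suc k \<in> canonical_filling n \<rho> w 1 j"
      using canonical_filling_covers by blast
  qed
  then show "psi n (length w) (canonical_filling n \<rho> w) ! k = w ! k"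
    using k by (cases "w ! k") (simp_all add: psi_def del: upt_Suc)
qed simp

end

theorem lemma8:
  fixes n :: nat and \<rho> :: "nat \<Rightarrow> nat \<Rightarrow> nat" and P1 P2 :: "step list"
  assumes "n \<ge> 1"
    and "\<forall>j\<in>{1..n}. \<rho> 1 j > 0 \<and> \<rho> 2 j > 0"
    and "a = (\<Sum>j=1..n. \<rho> 1 j)" and "b = (\<Sum>j=1..n. \<rho> 2 j)"
    and "P1 \<in> paths a b" and "P2 \<in> paths a b"
    and "weakly_above a P1 P2"
    and "P1 \<in> psi n (a + b) ` SVT2 n \<rho>"
  shows "P2 \<in> psi n (a + b) ` SVT2 n \<rho>"
proof -
  have a: "row_sum \<rho> 1 n = a" and b: "row_sum \<rho> 2 n = b"
    using assms(3,4) by (simp_all add: row_sum_def)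
  obtain T where T: "T \<in> SVT2 n \<rho>" and P1: "P1 = psi n (a + b) T"
    using assms(8) by blast
  have "admissible n \<rho> P1"
    using admissible_psi[OF T] assms(2) P1 a b by (simp add: dsize_eq_row_sums)
  then have "admissible n \<rho> P2"
    using admissible_if_weakly_above[OF assms(5-7)] a by blast
  moreover have "P2 \<in> paths (row_sum \<rho> 1 n) (row_sum \<rho> 2 n)"
    using assms(6) a b by simp
  ultimately have "canonical_filling n \<rho> P2 \<in> SVT2 n \<rho>"
    and "psi n (length P2) (canonical_filling n \<rho> P2) = P2"
    using canonical_filling_SVT2 psi_canonical_filling by blast+
  moreover have "length P2 = a + b" using assms(6) by (simp add: paths_def)
  ultimately show ?thesis by force
qed

end
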